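(* Let $\varphi$ be a Musielak–Orlicz function of uniformly lower type $p_\varphi^-$ for some $p_\varphi^-\in[1,\infty)$. If the Doob maximal operator $M$ is bounded on $L^{\varphi^*}(\Omega)$, then there is $C>0$ such that for every sequence $(g_k)_{k\in\mathbb N}$ of nonnegative $\mathcal F$-measurable functions (not necessarily adapted), $$\Big\|\sum_{k\in\mathbb N}\mathbb E_k(g_k)\Big\|_{L^\varphi(\Omega)}\le C\Big\|\sum_{k\in\mathbb N}g_k\Big\|_{L^\varphi(\Omega)}.$$
   Context: Let $(\Omega,\mathcal F,\mathbb P)$ be a probability space, $(\mathcal F_n)_{n\in\mathbb Z_+}$ a nondecreasing sequence of sub-$\sigma$-algebras of $\mathcal F$, $\mathbb E_n$ the conditional expectation w.r.t. $\mathcal F_n$, and $M(f):=\sup_{n\in\mathbb Z_+}|\mathbb E_n f|$. A Musielak–Orlicz function is $\varphi:\Omega\times[0,\infty)\to[0,\infty)$ with $\varphi(x,\cdot)$ nondecreasing, $\varphi(x,0)=0$, $\lim_{t\to\infty}\varphi(x,t)=\infty$ for each $x$, and $\varphi(\cdot,t)$ measurable for each $t$. For a function $\psi$ of this kind, $\|f\|_{L^\psi(\Omega)}:=\inf\{\lambda>0:\int_\Omega\psi(x,|f(x)|/\lambda)\,d\mathbb P\le1\}$. Uniformly lower type $p$: there is $C$ with $\varphi(x,st)\le Cs^p\varphi(x,t)$ for all $x$, $t\ge0$, $s\in(0,1)$. The complementary function is $\varphi^*(x,t):=\sup_{u>0}[ut-\varphi(x,u)]$. *)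

theory Defs
  imports "HOL-Probability.Probability"
begin

text \<open>Musielak--Orlicz function on the probability space M (only t \<ge> 0 matters).\<close>
definition musielak_orlicz :: "'a measure \<Rightarrow> ('a \<Rightarrow> real \<Rightarrow> real) \<Rightarrow> bool" where
  "musielak_orlicz M \<phi> \<longleftrightarrow>
     (\<forall>x\<in>space M. (\<forall>t\<ge>0. \<phi> x t \<ge> 0) \<and> mono_on {0..} (\<phi> x) \<and> \<phi> x 0 = 0
        \<and> filterlim (\<phi> x) at_top at_top) \<and>
     (\<forall>t\<ge>0. (\<lambda>x. \<phi> x t) \<in> borel_measurable M)"

definition uniformly_lower_type :: "'a measure \<Rightarrow> ('a \<Rightarrow> real \<Rightarrow> real) \<Rightarrow> real \<Rightarrow> bool" where
  "uniformly_lower_type M \<phi> p \<longleftrightarrow>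
     (\<exists>C. \<forall>x\<in>space M. \<forall>t\<ge>0. \<forall>s. 0 < s \<and> s < 1 \<longrightarrow> \<phi> x (s * t) \<le> C * s powr p * \<phi> x t)"

definition compl_fun :: "('a \<Rightarrow> real \<Rightarrow> real) \<Rightarrow> 'a \<Rightarrow> real \<Rightarrow> ennreal" where
  "compl_fun \<phi> x t = e2ennreal (SUP u\<in>{0<..}. ereal (u * t - \<phi> x u))"

text \<open>Luxemburg (quasi-)norm of a [0,\<infinity>]-valued function f w.r.t. \<psi>, with \<psi>(x,\<infinity>) = \<infinity>;
  the infimum of the empty set is \<infinity>. Apply to |f| for real f.\<close>
definition lux_norm :: "'a measure \<Rightarrow> ('a \<Rightarrow> real \<Rightarrow> ennreal) \<Rightarrow> ('a \<Rightarrow> ennreal) \<Rightarrow> ennreal" where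
  "lux_norm M \<psi> f = Inf {ennreal c | c. c > 0 \<and>
     (\<integral>\<^sup>+ x. (if f x = \<infinity> then \<infinity> else \<psi> x (enn2real (f x) / c)) \<partial>M) \<le> 1}"

definition doob_max :: "'a measure \<Rightarrow> (nat \<Rightarrow> 'a measure) \<Rightarrow> ('a \<Rightarrow> real) \<Rightarrow> 'a \<Rightarrow> ennreal" where
  "doob_max M F f x = (SUP n. ennreal \<bar>real_cond_exp M (F n) f x\<bar>)"

end

theory Submission
  imports Defs
begin

text \<open>Let E be the sum of the conditional expectations E_k g_k and G the sum of the g_k.
  If the Luxemburg norm of E exceeds \<lambda>, a bounded truncation f of E has modular larger than 1
  at \<lambda>. Lower type 1 (implied by lower type p \<ge> 1) turns f into a bounded norming function
  h \<ge> 0 of norm at most 1 in L^\<phi>* with \<integral> f h \<ge> \<lambda> / (2 C). Conditional expectations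
  are self-adjoint, so \<integral> E h = \<Sum>_k \<integral> g_k E_k h \<le> \<integral> G \<cdot> M h, and Hoelder's inequality
  together with the boundedness of M on L^\<phi>* bounds this by 4 K times the norm of G.
  Hence \<lambda> \<le> 8 C K times the norm of G.\<close>

definition orlicz_integrand :: "('a \<Rightarrow> real \<Rightarrow> ennreal) \<Rightarrow> ('a \<Rightarrow> ennreal) \<Rightarrow> real \<Rightarrow> 'a \<Rightarrow> ennreal" where
  "orlicz_integrand \<psi> f c x = (if f x = \<infinity> then \<infinity> else \<psi> x (enn2real (f x) / c))"

definition modular :: "'a measure \<Rightarrow> ('a \<Rightarrow> real \<Rightarrow> ennreal) \<Rightarrow> ('a \<Rightarrow> ennreal) \<Rightarrow> real \<Rightarrow> ennreal" where
  "modular M \<psi> f c = (\<integral>\<^sup>+ x. orlicz_integrand \<psi> f c x \<partial>M)"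

lemma lux_norm_le_of_modular_le:
  assumes "c > 0" "modular M \<psi> f c \<le> 1"
  shows "lux_norm M \<psi> f \<le> ennreal c"
  unfolding lux_norm_def using assms unfolding modular_def orlicz_integrand_def
  by (intro Inf_lower) auto

lemma one_less_modular_of_less_lux_norm:
  assumes "c > 0" "ennreal c < lux_norm M \<psi> f"
  shows "1 < modular M \<psi> f c"
  using lux_norm_le_of_modular_le[of c M \<psi> f] assms by force

lemma modular_antimono:
  assumes mono: "\<And>x s t. x \<in> space M \<Longrightarrow> 0 \<le> s \<Longrightarrow> s \<le> t \<Longrightarrow> \<psi> x s \<le> \<psi> x t"
    and "0 < c" "c \<le> c'"
  shows "modular M \<psi> f c' \<le> modular M \<psi> f c"
  unfolding modular_def orlicz_integrand_def
proof (rule nn_integral_mono)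
  fix x assume x: "x \<in> space M"
  have "enn2real (f x) / c' \<le> enn2real (f x) / c"
    using assms by (simp add: divide_left_mono)
  then show "(if f x = \<infinity> then \<infinity> else \<psi> x (enn2real (f x) / c'))
      \<le> (if f x = \<infinity> then \<infinity> else \<psi> x (enn2real (f x) / c))"
    using mono[OF x] assms by auto
qed

lemma modular_le_one_of_lux_norm_less:
  assumes mono: "\<And>x s t. x \<in> space M \<Longrightarrow> 0 \<le> s \<Longrightarrow> s \<le> t \<Longrightarrow> \<psi> x s \<le> \<psi> x t"
    and "lux_norm M \<psi> f < ennreal c"
  shows "modular M \<psi> f c \<le> 1"
proof -
  obtain c0 where c0: "c0 > 0" "modular M \<psi> f c0 \<le> 1" "ennreal c0 < ennreal c"
    using assms(2) unfolding lux_norm_def modular_def orlicz_integrand_def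
    by (auto simp: Inf_less_iff)
  then have "modular M \<psi> f c \<le> modular M \<psi> f c0"
    by (intro modular_antimono[OF mono]) (auto simp: ennreal_less_iff)
  with c0 show ?thesis by simp
qed

lemma
  assumes "musielak_orlicz M \<phi>"
  shows musielak_orlicz_nonneg: "\<And>x t. x \<in> space M \<Longrightarrow> 0 \<le> t \<Longrightarrow> 0 \<le> \<phi> x t"
    and musielak_orlicz_mono: "\<And>x s t. x \<in> space M \<Longrightarrow> 0 \<le> s \<Longrightarrow> s \<le> t \<Longrightarrow> \<phi> x s \<le> \<phi> x t"
    and musielak_orlicz_zero: "\<And>x. x \<in> space M \<Longrightarrow> \<phi> x 0 = 0"
    and musielak_orlicz_at_top: "\<And>x. x \<in> space M \<Longrightarrow> filterlim (\<phi> x) at_top at_top"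
    and musielak_orlicz_measurable: "\<And>t. 0 \<le> t \<Longrightarrow> (\<lambda>x. \<phi> x t) \<in> borel_measurable M"
  using assms unfolding musielak_orlicz_def mono_on_def by auto

lemma musielak_orlicz_ennreal_mono:
  "musielak_orlicz M \<phi> \<Longrightarrow> x \<in> space M \<Longrightarrow> 0 \<le> s \<Longrightarrow> s \<le> t \<Longrightarrow> ennreal (\<phi> x s) \<le> ennreal (\<phi> x t)"
  by (rule ennreal_leI, rule musielak_orlicz_mono)

lemma uniformly_lower_type_linear:
  assumes "uniformly_lower_type M \<phi> p" "p \<ge> 1" "musielak_orlicz M \<phi>"
  obtains C where "C \<ge> 1"
    "\<And>x t s. x \<in> space M \<Longrightarrow> 0 \<le> t \<Longrightarrow> 0 < s \<Longrightarrow> s < 1 \<Longrightarrow> \<phi> x (s * t) \<le> C * s * \<phi> x t"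
proof -
  obtain C where C: "\<forall>x\<in>space M. \<forall>t\<ge>0. \<forall>s. 0 < s \<and> s < 1 \<longrightarrow> \<phi> x (s * t) \<le> C * s powr p * \<phi> x t"
    using assms(1) unfolding uniformly_lower_type_def by blast
  show ?thesis
  proof (rule that[of "max C 1"])
    fix x and t s :: real assume x: "x \<in> space M" and t: "0 \<le> t" and s: "0 < s" "s < 1"
    have \<phi>0: "0 \<le> \<phi> x t" using musielak_orlicz_nonneg[OF assms(3) x t] .
    have "s powr p \<le> s" using powr_mono'[of 1 p s] s assms(2) by simp
    then have "C * s powr p \<le> max C 1 * s"
      using s by (intro mult_mono) auto
    then have "C * s powr p * \<phi> x t \<le> max C 1 * s * \<phi> x t"
      using \<phi>0 by (rule mult_right_mono)
    moreover have "\<phi> x (s * t) \<le> C * s powr p * \<phi> x t" using C x t s by blast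
    ultimately show "\<phi> x (s * t) \<le> max C 1 * s * \<phi> x t" by linarith
  qed simp
qed

text \<open>\<phi> is only measurable in x for fixed t, so x \<mapsto> \<phi> x (f x / b) need not be measurable.
  Taking the infimum over rational arguments above f x / b gives a measurable function squeezed
  between \<phi> x (f x / b) and \<phi> x (f x / a) for every a < b.\<close>

definition orlicz_env :: "('a \<Rightarrow> real \<Rightarrow> real) \<Rightarrow> ('a \<Rightarrow> ennreal) \<Rightarrow> real \<Rightarrow> 'a \<Rightarrow> ennreal" where
  "orlicz_env \<phi> f b x = (if f x = \<infinity> then \<infinity> else
     (INF q::rat. if enn2real (f x) / b \<le> real_of_rat q then ennreal (\<phi> x (max 0 (real_of_rat q))) else \<infinity>))"

lemma orlicz_env_measurable [measurable]:
  assumes "musielak_orlicz M \<phi>" and [measurable]: "f \<in> borel_measurable M"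
  shows "orlicz_env \<phi> f b \<in> borel_measurable M"
proof -
  have [measurable]: "\<And>q::rat. (\<lambda>x. \<phi> x (max 0 (real_of_rat q))) \<in> borel_measurable M"
    using musielak_orlicz_measurable[OF assms(1)] by simp
  show ?thesis
    unfolding orlicz_env_def by measurable
qed

lemma orlicz_integrand_le_orlicz_env:
  assumes mo: "musielak_orlicz M \<phi>" and x: "x \<in> space M" and "b > 0"
  shows "orlicz_integrand (\<lambda>x t. ennreal (\<phi> x t)) f b x \<le> orlicz_env \<phi> f b x"
proof (cases "f x = \<infinity>")
  case False
  have "0 \<le> enn2real (f x) / b" using assms by simp
  then have "ennreal (\<phi> x (enn2real (f x) / b))
      \<le> (if enn2real (f x) / b \<le> real_of_rat q then ennreal (\<phi> x (max 0 (real_of_rat q))) else \<infinity>)" for q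
    by (auto intro: musielak_orlicz_ennreal_mono[OF mo x])
  then have "ennreal (\<phi> x (enn2real (f x) / b)) \<le> (INF q::rat.
      if enn2real (f x) / b \<le> real_of_rat q then ennreal (\<phi> x (max 0 (real_of_rat q))) else \<infinity>)"
    by (rule INF_greatest)
  then show ?thesis
    using False unfolding orlicz_env_def orlicz_integrand_def by (simp only: if_False)
qed (simp add: orlicz_env_def orlicz_integrand_def)

lemma orlicz_env_le_orlicz_integrand:
  assumes mo: "musielak_orlicz M \<phi>" and x: "x \<in> space M" and "0 < a" "a < b"
  shows "orlicz_env \<phi> f b x \<le> orlicz_integrand (\<lambda>x t. ennreal (\<phi> x t)) f a x"
proof (cases "f x = \<infinity>")
  case False
  define t where "t = enn2real (f x)"
  have t0: "0 \<le> t" unfolding t_def by simp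
  obtain q :: rat where q: "t / b \<le> real_of_rat q" "real_of_rat q \<le> t / a"
  proof (cases "t = 0")
    case True then show ?thesis using that[of 0] by auto
  next
    case False
    then have "t / b < t / a" using t0 assms by (simp add: divide_strict_left_mono)
    then obtain r where "r \<in> \<rat>" "t / b < r" "r < t / a" using Rats_dense_in_real by blast
    then show ?thesis using that by (auto elim!: Rats_cases) (metis less_eq_real_def)
  qed
  have q0: "0 \<le> real_of_rat q" using q(1) t0 assms by (meson order.trans divide_nonneg_pos less_trans)
  have "(INF q::rat. if t / b \<le> real_of_rat q then ennreal (\<phi> x (max 0 (real_of_rat q))) else \<infinity>)
      \<le> (if t / b \<le> real_of_rat q then ennreal (\<phi> x (max 0 (real_of_rat q))) else \<infinity>)"
    by (rule INF_lower) simp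
  then have "orlicz_env \<phi> f b x \<le> ennreal (\<phi> x (max 0 (real_of_rat q)))"
    unfolding orlicz_env_def t_def using False q(1) t_def by (simp only: if_False if_True)
  also have "\<dots> \<le> ennreal (\<phi> x (t / a))"
    using q q0 by (auto intro: musielak_orlicz_ennreal_mono[OF mo x])
  finally show ?thesis using False unfolding orlicz_integrand_def t_def by simp
qed (simp add: orlicz_env_def orlicz_integrand_def)

lemma orlicz_env_mono:
  assumes "f x \<le> g x" "g x \<noteq> \<infinity>" "b > 0"
  shows "orlicz_env \<phi> f b x \<le> orlicz_env \<phi> g b x"
proof -
  have "f x \<noteq> \<infinity>" using assms by (auto simp: top_unique)
  moreover have "enn2real (f x) / b \<le> enn2real (g x) / b"
    using assms by (intro divide_right_mono enn2real_mono) (auto simp: top.not_eq_extremum)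
  then have "(INF q::rat. if enn2real (f x) / b \<le> real_of_rat q then ennreal (\<phi> x (max 0 (real_of_rat q))) else \<infinity>)
     \<le> (INF q::rat. if enn2real (g x) / b \<le> real_of_rat q then ennreal (\<phi> x (max 0 (real_of_rat q))) else \<infinity>)"
    by (intro INF_mono') auto
  ultimately show ?thesis
    using assms unfolding orlicz_env_def by (simp only: if_False)
qed

lemma orlicz_integrand_le_SUP_truncation:
  assumes mo: "musielak_orlicz M \<phi>" and x: "x \<in> space M" and b: "b > 0"
  shows "orlicz_integrand (\<lambda>x t. ennreal (\<phi> x t)) f b x
    \<le> (SUP R::nat. orlicz_env \<phi> (\<lambda>x. min (f x) (of_nat R)) b x)"
proof (cases "f x = \<infinity>")
  case True
  have lim: "filterlim (\<lambda>R::nat. \<phi> x (inverse b * real R)) at_top sequentially"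
    using b by (intro filterlim_compose[OF musielak_orlicz_at_top[OF mo x]]
        filterlim_tendsto_pos_mult_at_top[OF tendsto_const _ filterlim_real_sequentially]) auto
  have "top = (SUP R::nat. ennreal (\<phi> x (real R / b)))"
  proof (rule sym, rule ennreal_SUP_eq_top)
    fix n :: nat
    from lim obtain R where "real n \<le> \<phi> x (real R / b)"
      by (auto simp: filterlim_at_top eventually_sequentially field_simps)
    then show "\<exists>R\<in>UNIV. of_nat n \<le> ennreal (\<phi> x (real R / b))"
      by (auto simp: ennreal_of_nat_eq_real_of_nat intro: ennreal_leI)
  qed
  also have "\<dots> \<le> (SUP R::nat. orlicz_env \<phi> (\<lambda>x. min (f x) (of_nat R)) b x)"
  proof (rule SUP_mono)
    fix R :: nat
    show "\<exists>R'\<in>UNIV. ennreal (\<phi> x (real R / b)) \<le> orlicz_env \<phi> (\<lambda>x. min (f x) (of_nat R')) b x"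
      using True orlicz_integrand_le_orlicz_env[OF mo x b, of "\<lambda>x. min (f x) (of_nat R)"]
      by (intro bexI[of _ R]) (auto simp: orlicz_integrand_def)
  qed
  finally have SUP_top: "(SUP R::nat. orlicz_env \<phi> (\<lambda>x. min (f x) (of_nat R)) b x) = top"
    by (rule top_unique[THEN iffD1])
  show ?thesis unfolding SUP_top by (rule top_greatest)
next
  case False
  obtain R :: nat where R: "enn2real (f x) \<le> real R" using real_arch_simple by blast
  have "f x = ennreal (enn2real (f x))" using False by (simp add: ennreal_enn2real_if)
  also have "\<dots> \<le> of_nat R" using R by (simp add: ennreal_of_nat_eq_real_of_nat ennreal_leI)
  finally have "f x \<le> of_nat R" .
  then have "orlicz_integrand (\<lambda>x t. ennreal (\<phi> x t)) f b x
      = orlicz_integrand (\<lambda>x t. ennreal (\<phi> x t)) (\<lambda>x. min (f x) (of_nat R)) b x"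
    by (simp add: orlicz_integrand_def min_absorb1)
  also have "\<dots> \<le> orlicz_env \<phi> (\<lambda>x. min (f x) (of_nat R)) b x"
    by (rule orlicz_integrand_le_orlicz_env[OF mo x b])
  also have "\<dots> \<le> (SUP R::nat. orlicz_env \<phi> (\<lambda>x. min (f x) (of_nat R)) b x)"
    by (rule SUP_upper) simp
  finally show ?thesis .
qed

lemma one_less_modular_truncation:
  fixes f :: "'a \<Rightarrow> ennreal"
  assumes mo: "musielak_orlicz M \<phi>" and [measurable]: "f \<in> borel_measurable M"
    and "0 < a" "a < b" and big: "1 < modular M (\<lambda>x t. ennreal (\<phi> x t)) f b"
  obtains R :: nat where "1 < modular M (\<lambda>x t. ennreal (\<phi> x t)) (\<lambda>x. min (f x) (of_nat R)) a"
proof -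
  define env where "env R = orlicz_env \<phi> (\<lambda>x. min (f x) (of_nat R)) b" for R :: nat
  have env_measurable[measurable]: "env R \<in> borel_measurable M" for R
    unfolding env_def using mo by measurable
  have "incseq env"
  proof (intro incseq_SucI le_funI)
    fix R x
    have "min (f x) (of_nat R) \<le> min (f x) (of_nat (Suc R))"
      by (intro min.mono) auto
    moreover have "min (f x) (of_nat (Suc R)) \<noteq> \<infinity>"
      unfolding infinity_ennreal_def by (metis ennreal_of_nat_neq_top min.cobounded2 top_unique)
    ultimately show "env R x \<le> env (Suc R) x"
      unfolding env_def using assms by (intro orlicz_env_mono) auto
  qed
  have "1 < (\<integral>\<^sup>+ x. (SUP R. env R x) \<partial>M)"
    using big unfolding modular_def env_def
    by (rule less_le_trans) (use assms in \<open>auto intro!: nn_integral_mono orlicz_integrand_le_SUP_truncation[OF mo]\<close>)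
  also have "\<dots> = (SUP R. \<integral>\<^sup>+ x. env R x \<partial>M)"
    by (rule nn_integral_monotone_convergence_SUP[OF \<open>incseq env\<close>]) simp
  finally obtain R where "1 < (\<integral>\<^sup>+ x. env R x \<partial>M)" by (auto simp: less_SUP_iff)
  also have "\<dots> \<le> modular M (\<lambda>x t. ennreal (\<phi> x t)) (\<lambda>x. min (f x) (of_nat R)) a"
    unfolding modular_def env_def using assms
    by (intro nn_integral_mono orlicz_env_le_orlicz_integrand[OF mo])
  finally show ?thesis by (rule that)
qed

lemma compl_fun_le:
  assumes "\<And>u. u > 0 \<Longrightarrow> u * a - \<phi> x u \<le> B"
  shows "compl_fun \<phi> x a \<le> ennreal B"
proof -
  have "(SUP u\<in>{0<..}. ereal (u * a - \<phi> x u)) \<le> ereal B"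
    using assms by (intro SUP_least) auto
  then show ?thesis
    unfolding compl_fun_def by (metis e2ennreal_mono e2ennreal_ereal)
qed

lemma compl_fun_ge:
  assumes "u > 0"
  shows "ennreal (u * a - \<phi> x u) \<le> compl_fun \<phi> x a"
proof -
  have "ereal (u * a - \<phi> x u) \<le> (SUP u\<in>{0<..}. ereal (u * a - \<phi> x u))"
    using assms by (intro SUP_upper) auto
  then show ?thesis
    unfolding compl_fun_def by (metis e2ennreal_mono e2ennreal_ereal)
qed

lemma compl_fun_mono:
  assumes "0 \<le> s" "s \<le> t"
  shows "compl_fun \<phi> x s \<le> compl_fun \<phi> x t"
proof -
  have "(SUP u\<in>{0<..}. ereal (u * s - \<phi> x u)) \<le> (SUP u\<in>{0<..}. ereal (u * t - \<phi> x u))"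
    using assms by (intro SUP_mono) (auto intro!: bexI mult_left_mono)
  then show ?thesis unfolding compl_fun_def by (rule e2ennreal_mono)
qed

lemma young_inequality:
  assumes mo: "musielak_orlicz M \<phi>" and x: "x \<in> space M" and "0 \<le> u" "0 \<le> v"
  shows "ennreal (u * v) \<le> ennreal (\<phi> x u) + compl_fun \<phi> x v"
proof (cases "u = 0")
  case False
  have "ennreal (u * v) \<le> ennreal (\<phi> x u) + ennreal (u * v - \<phi> x u)"
    using musielak_orlicz_nonneg[OF mo x \<open>0 \<le> u\<close>]
    by (cases "\<phi> x u \<le> u * v") (auto simp flip: ennreal_plus intro: add_increasing2 ennreal_leI)
  also have "\<dots> \<le> ennreal (\<phi> x u) + compl_fun \<phi> x v"
    using False assms by (intro add_left_mono compl_fun_ge) auto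
  finally show ?thesis .
qed simp

text \<open>h is not assumed measurable: it will be a composite of \<open>compl_fun \<phi>\<close>, which need not be.\<close>

lemma nn_integral_le_add:
  assumes [measurable]: "f \<in> borel_measurable M" "g \<in> borel_measurable M"
    and le: "\<And>x. x \<in> space M \<Longrightarrow> f x \<le> g x + h x"
  shows "(\<integral>\<^sup>+ x. f x \<partial>M) \<le> (\<integral>\<^sup>+ x. g x \<partial>M) + (\<integral>\<^sup>+ x. h x \<partial>M)"
proof -
  define d where "d x = (if g x = \<infinity> then 0 else f x - g x)" for x
  have "(\<integral>\<^sup>+ x. f x \<partial>M) \<le> (\<integral>\<^sup>+ x. g x + d x \<partial>M)"
  proof (intro nn_integral_mono)
    fix x
    show "f x \<le> g x + d x"
      unfolding d_def by (cases "g x \<le> f x") (auto simp: add_diff_inverse_ennreal add_increasing2)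
  qed
  also have "\<dots> = (\<integral>\<^sup>+ x. g x \<partial>M) + (\<integral>\<^sup>+ x. d x \<partial>M)"
    unfolding d_def by (rule nn_integral_add) auto
  also have "\<dots> \<le> (\<integral>\<^sup>+ x. g x \<partial>M) + (\<integral>\<^sup>+ x. h x \<partial>M)"
    using le unfolding d_def by (intro add_left_mono nn_integral_mono) (auto simp: ennreal_minus_le_iff)
  finally show ?thesis .
qed

lemma holder_modular:
  assumes mo: "musielak_orlicz M \<phi>" and [measurable]: "G \<in> borel_measurable M" "Q \<in> borel_measurable M"
    and "\<alpha> > 0" "\<beta> > 0"
    and G: "modular M (\<lambda>x t. ennreal (\<phi> x t)) G \<alpha> \<le> 1"
    and Q: "modular M (compl_fun \<phi>) Q \<beta> \<le> 1"
  shows "(\<integral>\<^sup>+ x. G x * Q x \<partial>M) \<le> ennreal (4 * \<alpha> * \<beta>)"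
proof -
  define c where "c = 1 / (2 * \<alpha> * \<beta>)"
  have c: "c > 0" unfolding c_def using assms by simp
  \<comment> \<open>Young's inequality at G / (2 \<alpha>) and Q / \<beta>; the factor 2 leaves room to pass to the
    measurable \<open>orlicz_env\<close>, at the price of the constant 4.\<close>
  have pointwise: "G x * Q x * ennreal c
      \<le> orlicz_env \<phi> G (2 * \<alpha>) x + orlicz_integrand (compl_fun \<phi>) Q \<beta> x" if x: "x \<in> space M" for x
  proof (cases "G x = \<infinity> \<or> Q x = \<infinity>")
    case False
    then obtain g q where gq: "G x = ennreal g" "Q x = ennreal q" "0 \<le> g" "0 \<le> q"
      by (cases "G x"; cases "Q x") auto
    have "G x * Q x * ennreal c = ennreal ((g / (2 * \<alpha>)) * (q / \<beta>))"
      using gq c by (simp add: c_def ennreal_mult[symmetric])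
    also have "\<dots> \<le> ennreal (\<phi> x (g / (2 * \<alpha>))) + compl_fun \<phi> x (q / \<beta>)"
      using gq assms by (intro young_inequality[OF mo x]) auto
    also have "\<dots> \<le> orlicz_env \<phi> G (2 * \<alpha>) x + orlicz_integrand (compl_fun \<phi>) Q \<beta> x"
      using orlicz_integrand_le_orlicz_env[OF mo x, of "2 * \<alpha>" G] gq assms
      by (intro add_mono) (auto simp: orlicz_integrand_def)
    finally show ?thesis .
  qed (auto simp: orlicz_env_def orlicz_integrand_def)
  have "(\<integral>\<^sup>+ x. G x * Q x * ennreal c \<partial>M)
      \<le> (\<integral>\<^sup>+ x. orlicz_env \<phi> G (2 * \<alpha>) x \<partial>M) + modular M (compl_fun \<phi>) Q \<beta>"
    unfolding modular_def using mo by (intro nn_integral_le_add pointwise) auto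
  also have "\<dots> \<le> modular M (\<lambda>x t. ennreal (\<phi> x t)) G \<alpha> + modular M (compl_fun \<phi>) Q \<beta>"
    unfolding modular_def using assms
    by (intro add_right_mono nn_integral_mono orlicz_env_le_orlicz_integrand[OF mo]) auto
  also have "\<dots> \<le> 2" using add_mono[OF G Q] by simp
  finally have "(\<integral>\<^sup>+ x. G x * Q x \<partial>M) * ennreal c \<le> 2"
    by (simp add: nn_integral_multc)
  then have "(\<integral>\<^sup>+ x. G x * Q x \<partial>M) * ennreal c * ennreal (2 * \<alpha> * \<beta>) \<le> 2 * ennreal (2 * \<alpha> * \<beta>)"
    by (rule mult_right_mono) simp
  moreover have "ennreal c * ennreal (2 * \<alpha> * \<beta>) = 1"
    using assms by (simp add: c_def ennreal_mult[symmetric])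
  moreover have "2 * ennreal (2 * \<alpha> * \<beta>) = ennreal (4 * \<alpha> * \<beta>)"
    using assms by (simp add: ennreal_mult[symmetric] flip: ennreal_numeral)
  ultimately show ?thesis by (simp add: mult.assoc)
qed

lemma le_mult_of_le_perturbed:
  fixes l a b C :: real
  assumes "\<And>e. e > 0 \<Longrightarrow> l \<le> C * (a + e) * (b + e)"
  shows "l \<le> C * a * b"
proof (rule tendsto_lowerbound)
  show "((\<lambda>e. C * (a + e) * (b + e)) \<longlongrightarrow> C * a * b) (at_right 0)"
    by (auto intro!: tendsto_eq_intros)
  show "\<forall>\<^sub>F e in at_right 0. l \<le> C * (a + e) * (b + e)"
    using assms eventually_at_right_less by (rule eventually_mono[rotated]) auto
qed simp

lemma holder_lux_norm:
  assumes mo: "musielak_orlicz M \<phi>" and [measurable]: "G \<in> borel_measurable M" "Q \<in> borel_measurable M"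
    and finite: "lux_norm M (\<lambda>x t. ennreal (\<phi> x t)) G < \<infinity>" "lux_norm M (compl_fun \<phi>) Q < \<infinity>"
  shows "(\<integral>\<^sup>+ x. G x * Q x \<partial>M)
    \<le> 4 * lux_norm M (\<lambda>x t. ennreal (\<phi> x t)) G * lux_norm M (compl_fun \<phi>) Q"
proof -
  obtain a where a: "lux_norm M (\<lambda>x t. ennreal (\<phi> x t)) G = ennreal a" "0 \<le> a"
    using finite(1) by (cases "lux_norm M (\<lambda>x t. ennreal (\<phi> x t)) G" rule: ennreal_cases) auto
  obtain b where b: "lux_norm M (compl_fun \<phi>) Q = ennreal b" "0 \<le> b"
    using finite(2) by (cases "lux_norm M (compl_fun \<phi>) Q" rule: ennreal_cases) auto
  have bound: "(\<integral>\<^sup>+ x. G x * Q x \<partial>M) \<le> ennreal (4 * (a + e) * (b + e))" if e: "e > 0" for e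
  proof (rule holder_modular[OF mo])
    show "modular M (\<lambda>x t. ennreal (\<phi> x t)) G (a + e) \<le> 1"
    proof (rule modular_le_one_of_lux_norm_less)
      show "lux_norm M (\<lambda>x t. ennreal (\<phi> x t)) G < ennreal (a + e)"
        using a e by (simp add: ennreal_lessI)
    qed (rule musielak_orlicz_ennreal_mono[OF mo])
    show "modular M (compl_fun \<phi>) Q (b + e) \<le> 1"
    proof (rule modular_le_one_of_lux_norm_less)
      show "lux_norm M (compl_fun \<phi>) Q < ennreal (b + e)"
        using b e by (simp add: ennreal_lessI)
    qed (rule compl_fun_mono)
  qed (use a b e in auto)
  have "(\<integral>\<^sup>+ x. G x * Q x \<partial>M) < top"
  proof (rule le_less_trans)
    show "(\<integral>\<^sup>+ x. G x * Q x \<partial>M) \<le> ennreal (4 * (a + 1) * (b + 1))"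
      by (rule bound) simp
  qed (rule ennreal_less_top)
  then obtain i where i: "(\<integral>\<^sup>+ x. G x * Q x \<partial>M) = ennreal i" "0 \<le> i"
    by (auto simp: less_top_ennreal)
  have "i \<le> 4 * a * b"
  proof (rule le_mult_of_le_perturbed)
    fix e :: real assume "e > 0"
    then have "ennreal i \<le> ennreal (4 * (a + e) * (b + e))" using bound i by simp
    then show "i \<le> 4 * (a + e) * (b + e)"
      using a b \<open>e > 0\<close> by (subst (asm) ennreal_le_iff) auto
  qed
  then have "ennreal i \<le> ennreal (4 * a * b)" by (rule ennreal_leI)
  also have "\<dots> = 4 * ennreal a * ennreal b" using a b by (simp add: ennreal_mult)
  finally show ?thesis using a b i by simp
qed

lemma holder_lux_norm_le:
  assumes mo: "musielak_orlicz M \<phi>" and [measurable]: "G \<in> borel_measurable M" "Q \<in> borel_measurable M"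
    and Q: "lux_norm M (compl_fun \<phi>) Q \<le> ennreal K" and "K > 0"
  shows "(\<integral>\<^sup>+ x. G x * Q x \<partial>M) \<le> 4 * lux_norm M (\<lambda>x t. ennreal (\<phi> x t)) G * ennreal K"
proof (cases "lux_norm M (\<lambda>x t. ennreal (\<phi> x t)) G < \<infinity>")
  case True
  have "(\<integral>\<^sup>+ x. G x * Q x \<partial>M)
      \<le> 4 * lux_norm M (\<lambda>x t. ennreal (\<phi> x t)) G * lux_norm M (compl_fun \<phi>) Q"
    using True Q by (intro holder_lux_norm[OF mo]) (auto intro: le_less_trans)
  also have "\<dots> \<le> 4 * lux_norm M (\<lambda>x t. ennreal (\<phi> x t)) G * ennreal K"
    by (intro mult_left_mono Q) simp
  finally show ?thesis .
next
  case False
  then have "lux_norm M (\<lambda>x t. ennreal (\<phi> x t)) G = top"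
    unfolding infinity_ennreal_def less_top[symmetric] by simp
  then show ?thesis using \<open>K > 0\<close> by (simp add: ennreal_mult_top ennreal_top_mult)
qed

lemma sigma_finite_subalgebra_of_finite_measure:
  "finite_measure M \<Longrightarrow> subalgebra M N \<Longrightarrow> sigma_finite_subalgebra M N"
  by (intro finite_measure_subalgebra_is_sigma_finite)
    (simp add: finite_measure_subalgebra_def finite_measure_subalgebra_axioms_def)

lemma (in sigma_finite_subalgebra) nn_cond_exp_le_abs_real_cond_exp:
  assumes [measurable]: "h \<in> borel_measurable M"
    and h: "\<And>x. x \<in> space M \<Longrightarrow> 0 \<le> h x \<and> h x \<le> b"
  shows "AE x in M. nn_cond_exp M F (\<lambda>y. ennreal (h y)) x \<le> ennreal \<bar>real_cond_exp M F h x\<bar>"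
proof -
  have "AE x in M. nn_cond_exp M F (\<lambda>y. ennreal (h y)) x \<le> nn_cond_exp M F (\<lambda>y. ennreal b) x"
    using h by (intro nn_cond_exp_mono) (auto intro!: AE_I2 ennreal_leI)
  moreover have "AE x in M. ennreal b = nn_cond_exp M F (\<lambda>y. ennreal b) x"
    by (rule nn_cond_exp_F_meas) simp
  moreover have "AE x in M. nn_cond_exp M F (\<lambda>y. ennreal (- h y)) x = nn_cond_exp M F (\<lambda>y. 0) x"
    using h by (intro nn_cond_exp_cong) (auto simp: ennreal_neg)
  moreover have "AE x in M. 0 = nn_cond_exp M F (\<lambda>y. 0) x"
    by (rule nn_cond_exp_F_meas) simp
  ultimately show ?thesis
  proof eventually_elim
    case (elim x)
    then have "nn_cond_exp M F (\<lambda>y. ennreal (h y)) x \<noteq> \<infinity>"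
      by (auto simp: top_unique)
    then show ?case
      using elim unfolding real_cond_exp_def by (simp add: ennreal_enn2real_if)
  qed
qed

lemma (in sigma_finite_subalgebra) nn_integral_nn_cond_exp_mult_le:
  assumes [measurable]: "g \<in> borel_measurable M" "h \<in> borel_measurable M" "D \<in> borel_measurable M"
    and h: "\<And>x. x \<in> space M \<Longrightarrow> 0 \<le> h x \<and> h x \<le> b"
    and D: "\<And>x. x \<in> space M \<Longrightarrow> ennreal \<bar>real_cond_exp M F h x\<bar> \<le> D x"
  shows "(\<integral>\<^sup>+ x. nn_cond_exp M F g x * ennreal (h x) \<partial>M) \<le> (\<integral>\<^sup>+ x. g x * D x \<partial>M)"
proof -
  have "(\<integral>\<^sup>+ x. nn_cond_exp M F g x * ennreal (h x) \<partial>M)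
      = (\<integral>\<^sup>+ x. nn_cond_exp M F g x * nn_cond_exp M F (\<lambda>y. ennreal (h y)) x \<partial>M)"
    by (rule nn_cond_exp_intg[symmetric]) auto
  also have "\<dots> = (\<integral>\<^sup>+ x. nn_cond_exp M F (\<lambda>y. ennreal (h y)) x * g x \<partial>M)"
    by (subst mult.commute) (rule nn_cond_exp_intg; simp)
  also have "\<dots> \<le> (\<integral>\<^sup>+ x. g x * D x \<partial>M)"
  proof (rule nn_integral_mono_AE)
    have "AE x in M. nn_cond_exp M F (\<lambda>y. ennreal (h y)) x \<le> ennreal \<bar>real_cond_exp M F h x\<bar>"
      by (rule nn_cond_exp_le_abs_real_cond_exp) (use h in auto)
    then show "AE x in M. nn_cond_exp M F (\<lambda>y. ennreal (h y)) x * g x \<le> g x * D x"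
    proof (rule AE_mp, intro AE_I2 impI)
      fix x assume "x \<in> space M"
        and "nn_cond_exp M F (\<lambda>y. ennreal (h y)) x \<le> ennreal \<bar>real_cond_exp M F h x\<bar>"
      then have "nn_cond_exp M F (\<lambda>y. ennreal (h y)) x \<le> D x" using D by (blast intro: order_trans)
      then show "nn_cond_exp M F (\<lambda>y. ennreal (h y)) x * g x \<le> g x * D x"
        by (subst mult.commute) (rule mult_left_mono; simp)
    qed
  qed
  finally show ?thesis .
qed

lemma doob_max_measurable [measurable]: "doob_max M F h \<in> borel_measurable M"
  unfolding doob_max_def by measurable

lemma nn_integral_suminf_nn_cond_exp_le_doob_max:
  assumes "finite_measure M" "\<And>n. subalgebra M (F n)"
    and [measurable]: "\<And>k. g k \<in> borel_measurable M" "h \<in> borel_measurable M"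
    and h: "\<And>x. x \<in> space M \<Longrightarrow> 0 \<le> h x \<and> h x \<le> b"
  shows "(\<integral>\<^sup>+ x. (\<Sum>k. nn_cond_exp M (F k) (g k) x) * ennreal (h x) \<partial>M)
      \<le> (\<integral>\<^sup>+ x. (\<Sum>k. g k x) * doob_max M F h x \<partial>M)"
proof -
  have "(\<integral>\<^sup>+ x. (\<Sum>k. nn_cond_exp M (F k) (g k) x) * ennreal (h x) \<partial>M)
      = (\<integral>\<^sup>+ x. (\<Sum>k. nn_cond_exp M (F k) (g k) x * ennreal (h x)) \<partial>M)"
    by simp
  also have "\<dots> = (\<Sum>k. \<integral>\<^sup>+ x. nn_cond_exp M (F k) (g k) x * ennreal (h x) \<partial>M)"
    by (rule nn_integral_suminf) measurable
  also have "\<dots> \<le> (\<Sum>k. \<integral>\<^sup>+ x. g k x * doob_max M F h x \<partial>M)"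
  proof (intro suminf_le summableI)
    fix k
    interpret sigma_finite_subalgebra M "F k"
      using assms(1,2) by (rule sigma_finite_subalgebra_of_finite_measure)
    show "(\<integral>\<^sup>+ x. nn_cond_exp M (F k) (g k) x * ennreal (h x) \<partial>M) \<le> (\<integral>\<^sup>+ x. g k x * doob_max M F h x \<partial>M)"
      using h unfolding doob_max_def by (intro nn_integral_nn_cond_exp_mult_le) (auto intro: SUP_upper)
  qed
  also have "\<dots> = (\<integral>\<^sup>+ x. (\<Sum>k. g k x * doob_max M F h x) \<partial>M)"
    by (rule nn_integral_suminf[symmetric]) measurable
  also have "\<dots> = (\<integral>\<^sup>+ x. (\<Sum>k. g k x) * doob_max M F h x \<partial>M)"
    by simp
  finally show ?thesis .
qed

lemma compl_fun_ratio_le: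
  assumes mo: "musielak_orlicz M \<phi>" and x: "x \<in> space M"
    and lower: "\<And>t s. 0 \<le> t \<Longrightarrow> 0 < s \<Longrightarrow> s < 1 \<Longrightarrow> \<phi> x (s * t) \<le> C * s * \<phi> x t"
    and c: "0 \<le> c" "2 * c * C \<le> 1" and t: "t > 0" and w: "0 \<le> w" "w \<le> \<phi> x (2 * t)"
  shows "compl_fun \<phi> x (c * w / t) \<le> ennreal (2 * c * w)"
proof (rule compl_fun_le)
  fix u :: real assume u: "u > 0"
  have \<phi>u: "0 \<le> \<phi> x u" using musielak_orlicz_nonneg[OF mo x] u by simp
  show "u * (c * w / t) - \<phi> x u \<le> 2 * c * w"
  proof (cases "u \<le> 2 * t")
    case True
    have "u * (c * w / t) \<le> 2 * t * (c * w / t)"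
      using True c w t by (intro mult_right_mono) auto
    then show ?thesis using t \<phi>u by simp
  next
    case False
    define s where "s = 2 * t / u"
    have s: "0 < s" "s < 1" using False t u unfolding s_def by auto
    have "w \<le> \<phi> x (s * u)" using w u unfolding s_def by simp
    also have "\<dots> \<le> C * s * \<phi> x u" using lower[OF _ s] u by simp
    finally have "u * (c * w / t) \<le> u * (c * (C * s * \<phi> x u) / t)"
      using c u t by (intro mult_left_mono divide_right_mono) auto
    also have "\<dots> = 2 * c * C * \<phi> x u" unfolding s_def using u t by (simp add: field_simps)
    also have "\<dots> \<le> \<phi> x u" using c \<phi>u mult_right_mono[of "2 * c * C" 1 "\<phi> x u"] by simp
    finally have "u * (c * w / t) \<le> \<phi> x u" .
    moreover have "0 \<le> 2 * c * w" using c w by simp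
    ultimately show ?thesis by linarith
  qed
qed

lemma ratio_le_of_lower_type:
  fixes t w k C :: real
  assumes lower: "\<And>t s. 0 \<le> t \<Longrightarrow> 0 < s \<Longrightarrow> s < 1 \<Longrightarrow> \<phi> x (s * t) \<le> C * s * \<phi> x t"
    and "C \<ge> 1" and t: "t > 0" and w: "0 \<le> w" "w \<le> \<phi> x (2 * t)" "w \<le> k" and "\<phi> x 1 \<le> k"
  shows "w / t \<le> 2 * C * k"
proof (cases "2 * t < 1")
  case True
  have "w \<le> \<phi> x ((2 * t) * 1)" using w by simp
  also have "\<dots> \<le> C * (2 * t) * \<phi> x 1" using lower[of 1 "2 * t"] True t by simp
  also have "\<dots> \<le> C * (2 * t) * k" using assms t by (intro mult_left_mono) auto
  finally show ?thesis using t by (simp add: divide_le_eq mult_ac)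
next
  case False
  then have "w * 1 \<le> w * (2 * t)" using w by (intro mult_left_mono) auto
  then have "w / t \<le> 2 * w" using t by (simp add: divide_le_eq mult_ac)
  also have "\<dots> \<le> 2 * C * k" using assms w mult_right_mono[of 1 C k] by simp
  finally show ?thesis .
qed

lemma nn_integral_truncation_gt:
  fixes m :: "'a \<Rightarrow> ennreal" and a :: "'a \<Rightarrow> real"
  assumes [measurable]: "m \<in> borel_measurable M" "a \<in> borel_measurable M"
    and finite: "\<And>x. x \<in> space M \<Longrightarrow> m x \<noteq> \<infinity>" and r: "r < (\<integral>\<^sup>+ x. m x \<partial>M)"
  obtains k :: nat where "r < (\<integral>\<^sup>+ x. (if m x \<le> of_nat k \<and> a x \<le> real k then m x else 0) \<partial>M)"
proof -
  define mk where "mk k x = (if m x \<le> of_nat k \<and> a x \<le> real k then m x else 0)" for k :: nat and x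
  have "incseq mk"
  proof (intro incseq_SucI le_funI)
    fix k x
    have "(of_nat k :: ennreal) \<le> of_nat (Suc k)" "real k \<le> real (Suc k)"
      by (intro of_nat_mono, simp)+
    then show "mk k x \<le> mk (Suc k) x"
      unfolding mk_def by (auto intro: order_trans simp del: of_nat_Suc)
  qed
  have "(SUP k. mk k x) = m x" if x: "x \<in> space M" for x
  proof (rule antisym)
    show "(SUP k. mk k x) \<le> m x" by (rule SUP_least) (simp add: mk_def)
    obtain k :: nat where k: "enn2real (m x) \<le> real k" "a x \<le> real k"
      using real_arch_simple[of "max (enn2real (m x)) (a x)"] by auto
    have "m x = ennreal (enn2real (m x))" using finite[OF x] by (simp add: ennreal_enn2real_if)
    also have "\<dots> \<le> of_nat k" using k by (simp add: ennreal_of_nat_eq_real_of_nat ennreal_leI)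
    finally have "mk k x = m x" using k unfolding mk_def by simp
    then show "m x \<le> (SUP k. mk k x)" by (metis SUP_upper UNIV_I)
  qed
  then have "(\<integral>\<^sup>+ x. m x \<partial>M) = (\<integral>\<^sup>+ x. (SUP k. mk k x) \<partial>M)"
    by (intro nn_integral_cong) simp
  also have "\<dots> = (SUP k. \<integral>\<^sup>+ x. mk k x \<partial>M)"
    using \<open>incseq mk\<close> by (rule nn_integral_monotone_convergence_SUP) (unfold mk_def, measurable)
  finally show ?thesis using r that unfolding mk_def by (auto simp: less_SUP_iff)
qed

text \<open>Discarding the points where \<phi> x 1 > k keeps the norming function built below bounded,
  hence integrable, as the hypothesis on the maximal operator requires.\<close>

lemma exists_truncated_orlicz_minorant:
  fixes f :: "'a \<Rightarrow> real"
  assumes mo: "musielak_orlicz M \<phi>" and "finite_measure M"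
    and [measurable]: "f \<in> borel_measurable M" and f: "\<And>x. x \<in> space M \<Longrightarrow> 0 \<le> f x"
    and "lam > 0" and big: "1 < modular M (\<lambda>x t. ennreal (\<phi> x t)) (\<lambda>x. ennreal (f x)) lam"
  obtains w :: "'a \<Rightarrow> real" and k :: real where "w \<in> borel_measurable M" "0 \<le> k"
    "\<And>x. x \<in> space M \<Longrightarrow> 0 \<le> w x \<and> w x \<le> \<phi> x (2 * (f x / lam)) \<and> w x \<le> k \<and> (w x \<noteq> 0 \<longrightarrow> \<phi> x 1 \<le> k)"
    "1 < (\<integral>\<^sup>+ x. ennreal (w x) \<partial>M)" "(\<integral>\<^sup>+ x. ennreal (w x) \<partial>M) < \<infinity>"
proof -
  define m where "m = orlicz_env \<phi> (\<lambda>x. ennreal (f x)) lam"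
  have meas[measurable]: "m \<in> borel_measurable M" "(\<lambda>x. \<phi> x 1) \<in> borel_measurable M"
    unfolding m_def using mo by (auto intro: musielak_orlicz_measurable)
  have m_le: "m x \<le> ennreal (\<phi> x (2 * (f x / lam)))" if x: "x \<in> space M" for x
    using orlicz_env_le_orlicz_integrand[OF mo x, of "lam / 2" lam "\<lambda>x. ennreal (f x)"] f[OF x] \<open>lam > 0\<close>
    unfolding m_def orlicz_integrand_def by (simp add: mult.commute)
  have m_finite: "m x \<noteq> \<infinity>" if "x \<in> space M" for x
    using m_le[OF that] unfolding infinity_ennreal_def by (rule neq_top_trans[rotated]) simp
  have "1 < (\<integral>\<^sup>+ x. m x \<partial>M)"
    using big unfolding modular_def m_def
    by (rule less_le_trans) (use \<open>lam > 0\<close> in \<open>auto intro!: nn_integral_mono orlicz_integrand_le_orlicz_env[OF mo]\<close>)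
  then obtain k :: nat where k: "1 < (\<integral>\<^sup>+ x. (if m x \<le> of_nat k \<and> \<phi> x 1 \<le> real k then m x else 0) \<partial>M)"
    using nn_integral_truncation_gt[OF meas m_finite] by blast
  define w where "w x = enn2real (if m x \<le> of_nat k \<and> \<phi> x 1 \<le> real k then m x else 0)" for x
  have w_eq: "ennreal (w x) = (if m x \<le> of_nat k \<and> \<phi> x 1 \<le> real k then m x else 0)" for x
    unfolding w_def by (auto simp: ennreal_enn2real_if top_unique)
  show ?thesis
  proof (rule that[of w "real k"])
    show "w \<in> borel_measurable M" unfolding w_def by measurable
    show "1 < (\<integral>\<^sup>+ x. ennreal (w x) \<partial>M)" unfolding w_eq by (rule k)
    have "(\<integral>\<^sup>+ x. ennreal (w x) \<partial>M) \<le> (\<integral>\<^sup>+ x. of_nat k \<partial>M)"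
      unfolding w_eq by (intro nn_integral_mono) auto
    also have "\<dots> < \<infinity>"
      using finite_measure.emeasure_finite[OF \<open>finite_measure M\<close>, of "space M"]
      by (simp add: ennreal_mult_less_top of_nat_less_top top.not_eq_extremum)
    finally show "(\<integral>\<^sup>+ x. ennreal (w x) \<partial>M) < \<infinity>" .
    fix x assume x: "x \<in> space M"
    have "ennreal (w x) \<le> ennreal (\<phi> x (2 * (f x / lam)))" "ennreal (w x) \<le> ennreal (real k)"
      using m_le[OF x] unfolding w_eq by (auto simp: ennreal_of_nat_eq_real_of_nat)
    then show "0 \<le> w x \<and> w x \<le> \<phi> x (2 * (f x / lam)) \<and> w x \<le> real k \<and> (w x \<noteq> 0 \<longrightarrow> \<phi> x 1 \<le> real k)"
      using musielak_orlicz_nonneg[OF mo x] f[OF x] \<open>lam > 0\<close>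
      by (auto simp: w_def ennreal_le_iff split: if_splits)
  qed simp
qed

lemma norming_quotient_bounds:
  fixes t w k c C :: real
  assumes mo: "musielak_orlicz M \<phi>" and x: "x \<in> space M"
    and lower: "\<And>t s. 0 \<le> t \<Longrightarrow> 0 < s \<Longrightarrow> s < 1 \<Longrightarrow> \<phi> x (s * t) \<le> C * s * \<phi> x t"
    and "C \<ge> 1" and c: "0 < c" "2 * c * C \<le> 1" and "0 \<le> t" "0 \<le> k"
    and w: "0 \<le> w" "w \<le> \<phi> x (2 * t)" "w \<le> k" "w \<noteq> 0 \<Longrightarrow> \<phi> x 1 \<le> k"
  shows "0 \<le> c * w / t \<and> c * w / t \<le> c * (2 * C * k)"
    and "compl_fun \<phi> x (c * w / t) \<le> ennreal (2 * c * w)"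
    and "t * (c * w / t) = c * w"
proof -
  have w0: "w = 0" if "t = 0"
    using w musielak_orlicz_zero[OF mo x] that by simp
  show "0 \<le> c * w / t \<and> c * w / t \<le> c * (2 * C * k)"
  proof (cases "t = 0 \<or> w = 0")
    case True
    then show ?thesis using c \<open>C \<ge> 1\<close> \<open>0 \<le> k\<close> by auto
  next
    case False
    then have "t > 0" using \<open>0 \<le> t\<close> by simp
    have "w / t \<le> 2 * C * k"
      using w \<open>t > 0\<close> \<open>C \<ge> 1\<close> False
      by (intro ratio_le_of_lower_type[where \<phi>=\<phi> and x=x, OF lower]) auto
    then have "c * (w / t) \<le> c * (2 * C * k)" using c by (intro mult_left_mono) auto
    moreover have "0 \<le> c * (w / t)" using c w \<open>t > 0\<close> by simp
    ultimately show ?thesis by simp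
  qed
  show "compl_fun \<phi> x (c * w / t) \<le> ennreal (2 * c * w)"
  proof (cases "t = 0")
    case True
    have "compl_fun \<phi> x 0 \<le> ennreal 0"
      by (rule compl_fun_le) (use musielak_orlicz_nonneg[OF mo x] in simp)
    then show ?thesis using True by simp
  next
    case False
    then show ?thesis using c w \<open>0 \<le> t\<close> by (intro compl_fun_ratio_le[OF mo x lower]) auto
  qed
  show "t * (c * w / t) = c * w" using w0 by (cases "t = 0") auto
qed

lemma exists_norming_function:
  fixes f :: "'a \<Rightarrow> real"
  assumes mo: "musielak_orlicz M \<phi>" and "finite_measure M" and "C \<ge> 1"
    and lower: "\<And>x t s. x \<in> space M \<Longrightarrow> 0 \<le> t \<Longrightarrow> 0 < s \<Longrightarrow> s < 1 \<Longrightarrow> \<phi> x (s * t) \<le> C * s * \<phi> x t"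
    and [measurable]: "f \<in> borel_measurable M" and f: "\<And>x. x \<in> space M \<Longrightarrow> 0 \<le> f x"
    and "lam > 0" and big: "1 < modular M (\<lambda>x t. ennreal (\<phi> x t)) (\<lambda>x. ennreal (f x)) lam"
  obtains h :: "'a \<Rightarrow> real" and B where "h \<in> borel_measurable M" "\<And>x. x \<in> space M \<Longrightarrow> 0 \<le> h x \<and> h x \<le> B"
    "lux_norm M (compl_fun \<phi>) (\<lambda>x. ennreal \<bar>h x\<bar>) \<le> 1"
    "ennreal (lam / (2 * C)) \<le> (\<integral>\<^sup>+ x. ennreal (f x) * ennreal (h x) \<partial>M)"
proof -
  obtain w k where [measurable]: "w \<in> borel_measurable M" and "0 \<le> k"
    and w: "\<And>x. x \<in> space M \<Longrightarrow> 0 \<le> w x \<and> w x \<le> \<phi> x (2 * (f x / lam)) \<and> w x \<le> k \<and> (w x \<noteq> 0 \<longrightarrow> \<phi> x 1 \<le> k)"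
    and int_w: "1 < (\<integral>\<^sup>+ x. ennreal (w x) \<partial>M)" "(\<integral>\<^sup>+ x. ennreal (w x) \<partial>M) < \<infinity>"
    using exists_truncated_orlicz_minorant[OF mo assms(2,5) f \<open>lam > 0\<close> big] by blast
  obtain W where W: "(\<integral>\<^sup>+ x. ennreal (w x) \<partial>M) = ennreal W" "1 < W"
    using int_w by (cases "\<integral>\<^sup>+ x. ennreal (w x) \<partial>M" rule: ennreal_cases) (auto simp: ennreal_less_iff)
  define c where "c = 1 / (2 * C * W)"
  have "2 * c * C = 1 / W" "2 * c * W = 1 / C" "0 < c"
    using W \<open>C \<ge> 1\<close> by (simp_all add: c_def)
  then have c: "0 < c" "2 * c * C \<le> 1" "2 * c * W = 1 / C"
    using W by simp_all
  \<comment> \<open>With t = f / lam this gives f h = lam c w, while lower type 1 gives \<open>\<phi>*(h) \<le> 2 c w\<close>;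
    c normalises \<open>\<integral> 2 c w\<close> to 1 / C.\<close>
  define h where "h x = c * w x / (f x / lam)" for x
  have h: "0 \<le> h x \<and> h x \<le> c * (2 * C * k)" "compl_fun \<phi> x \<bar>h x\<bar> \<le> ennreal (2 * c) * ennreal (w x)"
      "ennreal (f x) * ennreal (h x) = ennreal (lam * c) * ennreal (w x)" if x: "x \<in> space M" for x
  proof -
    note bounds = norming_quotient_bounds[OF mo x lower[OF x] \<open>C \<ge> 1\<close> c(1,2), of "f x / lam" k "w x",
        folded h_def]
    show "0 \<le> h x \<and> h x \<le> c * (2 * C * k)"
      using bounds(1) w[OF x] f[OF x] \<open>0 \<le> k\<close> \<open>lam > 0\<close> by simp
    then show "compl_fun \<phi> x \<bar>h x\<bar> \<le> ennreal (2 * c) * ennreal (w x)"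
      using bounds(2) w[OF x] f[OF x] \<open>0 \<le> k\<close> \<open>lam > 0\<close> c by (simp add: ennreal_mult)
    have "f x * h x = lam * c * w x"
      using bounds(3) w[OF x] f[OF x] \<open>0 \<le> k\<close> \<open>lam > 0\<close> by (simp add: field_simps)
    then show "ennreal (f x) * ennreal (h x) = ennreal (lam * c) * ennreal (w x)"
      using \<open>0 \<le> h x \<and> h x \<le> c * (2 * C * k)\<close> f[OF x] w[OF x] c \<open>lam > 0\<close>
      by (simp add: ennreal_mult[symmetric])
  qed
  show ?thesis
  proof (rule that[of h "c * (2 * C * k)"])
    show "h \<in> borel_measurable M" unfolding h_def by measurable
    show "0 \<le> h x \<and> h x \<le> c * (2 * C * k)" if "x \<in> space M" for x using h(1)[OF that] .
    have "modular M (compl_fun \<phi>) (\<lambda>x. ennreal \<bar>h x\<bar>) 1 \<le> (\<integral>\<^sup>+ x. ennreal (2 * c) * ennreal (w x) \<partial>M)"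
      unfolding modular_def orlicz_integrand_def by (intro nn_integral_mono) (simp add: h(2))
    also have "\<dots> = ennreal (1 / C)"
      using W c by (simp add: nn_integral_cmult ennreal_mult[symmetric])
    also have "\<dots> \<le> 1" using \<open>C \<ge> 1\<close> by simp
    finally show "lux_norm M (compl_fun \<phi>) (\<lambda>x. ennreal \<bar>h x\<bar>) \<le> 1"
      using lux_norm_le_of_modular_le[of 1] by simp
    have "(\<integral>\<^sup>+ x. ennreal (f x) * ennreal (h x) \<partial>M) = (\<integral>\<^sup>+ x. ennreal (lam * c) * ennreal (w x) \<partial>M)"
      by (intro nn_integral_cong) (simp add: h(3))
    also have "\<dots> = ennreal (lam * c) * ennreal W"
      using W by (simp add: nn_integral_cmult)
    also have "\<dots> = ennreal (lam / (2 * C))"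
      using W c \<open>lam > 0\<close> by (simp add: ennreal_mult[symmetric] c_def)
    finally show "ennreal (lam / (2 * C)) \<le> (\<integral>\<^sup>+ x. ennreal (f x) * ennreal (h x) \<partial>M)" by simp
  qed
qed

lemma le_lux_norm_sum_of_one_less_modular:
  fixes g :: "nat \<Rightarrow> 'a \<Rightarrow> ennreal" and f :: "'a \<Rightarrow> real"
  assumes "finite_measure M" and sub: "\<And>n. subalgebra M (F n)"
    and mo: "musielak_orlicz M \<phi>" and "C \<ge> 1"
    and lower: "\<And>x t s. x \<in> space M \<Longrightarrow> 0 \<le> t \<Longrightarrow> 0 < s \<Longrightarrow> s < 1 \<Longrightarrow> \<phi> x (s * t) \<le> C * s * \<phi> x t"
    and "K > 0"
    and doob: "\<And>h. h \<in> borel_measurable M \<Longrightarrow> integrable M h \<Longrightarrow>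
      lux_norm M (compl_fun \<phi>) (doob_max M F h) \<le> ennreal K * lux_norm M (compl_fun \<phi>) (\<lambda>x. ennreal \<bar>h x\<bar>)"
    and [measurable]: "\<And>k. g k \<in> borel_measurable M"
    and f_measurable[measurable]: "f \<in> borel_measurable M"
    and f: "\<And>x. x \<in> space M \<Longrightarrow> 0 \<le> f x"
    and f_le: "\<And>x. x \<in> space M \<Longrightarrow> ennreal (f x) \<le> (\<Sum>k. nn_cond_exp M (F k) (g k) x)"
    and "lam > 0" and big: "1 < modular M (\<lambda>x t. ennreal (\<phi> x t)) (\<lambda>x. ennreal (f x)) lam"
  shows "ennreal lam \<le> ennreal (8 * C * K) * lux_norm M (\<lambda>x t. ennreal (\<phi> x t)) (\<lambda>x. \<Sum>k. g k x)"
proof -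
  define G where "G x = (\<Sum>k. g k x)" for x
  have [measurable]: "G \<in> borel_measurable M" unfolding G_def by measurable
  define norm_G where "norm_G = lux_norm M (\<lambda>x t. ennreal (\<phi> x t)) G"
  obtain h B where [measurable]: "h \<in> borel_measurable M" and h: "\<And>x. x \<in> space M \<Longrightarrow> 0 \<le> h x \<and> h x \<le> B"
    and norm_h: "lux_norm M (compl_fun \<phi>) (\<lambda>x. ennreal \<bar>h x\<bar>) \<le> 1"
    and norming: "ennreal (lam / (2 * C)) \<le> (\<integral>\<^sup>+ x. ennreal (f x) * ennreal (h x) \<partial>M)"
    using exists_norming_function[OF mo assms(1,4) lower f_measurable f \<open>lam > 0\<close> big] by blast
  have "integrable M h"
    using \<open>finite_measure M\<close> h by (intro finite_measure.integrable_const_bound[where B=B]) (auto intro!: AE_I2)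
  then have "lux_norm M (compl_fun \<phi>) (doob_max M F h) \<le> ennreal K * lux_norm M (compl_fun \<phi>) (\<lambda>x. ennreal \<bar>h x\<bar>)"
    by (intro doob) simp
  also have "\<dots> \<le> ennreal K" using mult_left_mono[OF norm_h, of "ennreal K"] by simp
  finally have norm_Mh: "lux_norm M (compl_fun \<phi>) (doob_max M F h) \<le> ennreal K" .
  note norming
  also have "(\<integral>\<^sup>+ x. ennreal (f x) * ennreal (h x) \<partial>M)
      \<le> (\<integral>\<^sup>+ x. (\<Sum>k. nn_cond_exp M (F k) (g k) x) * ennreal (h x) \<partial>M)"
    by (rule nn_integral_mono, rule mult_right_mono[OF f_le]) simp_all
  also have "\<dots> \<le> (\<integral>\<^sup>+ x. G x * doob_max M F h x \<partial>M)"
    unfolding G_def by (rule nn_integral_suminf_nn_cond_exp_le_doob_max[OF assms(1,2)]) (use h in auto)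
  also have "\<dots> \<le> 4 * norm_G * ennreal K"
    unfolding norm_G_def using norm_Mh \<open>K > 0\<close> by (intro holder_lux_norm_le[OF mo]) auto
  finally have "ennreal (2 * C) * ennreal (lam / (2 * C)) \<le> ennreal (2 * C) * (4 * norm_G * ennreal K)"
    by (rule mult_left_mono) simp
  also have "ennreal (2 * C) * ennreal (lam / (2 * C)) = ennreal lam"
    using \<open>C \<ge> 1\<close> \<open>lam > 0\<close> by (simp add: ennreal_mult[symmetric])
  also have "ennreal (2 * C) * (4 * norm_G * ennreal K) = ennreal (8 * C * K) * norm_G"
  proof -
    have "ennreal (8 * C * K) = ennreal (2 * C) * ennreal 4 * ennreal K"
      using \<open>C \<ge> 1\<close> \<open>K > 0\<close> by (simp add: ennreal_mult[symmetric] del: ennreal_numeral)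
    then show ?thesis by (simp add: mult_ac)
  qed
  finally show ?thesis unfolding norm_G_def G_def .
qed

lemma lux_norm_suminf_nn_cond_exp_le:
  fixes g :: "nat \<Rightarrow> 'a \<Rightarrow> ennreal"
  assumes "finite_measure M" and sub: "\<And>n. subalgebra M (F n)"
    and mo: "musielak_orlicz M \<phi>" and "C \<ge> 1"
    and lower: "\<And>x t s. x \<in> space M \<Longrightarrow> 0 \<le> t \<Longrightarrow> 0 < s \<Longrightarrow> s < 1 \<Longrightarrow> \<phi> x (s * t) \<le> C * s * \<phi> x t"
    and "K > 0"
    and doob: "\<And>h. h \<in> borel_measurable M \<Longrightarrow> integrable M h \<Longrightarrow>
      lux_norm M (compl_fun \<phi>) (doob_max M F h) \<le> ennreal K * lux_norm M (compl_fun \<phi>) (\<lambda>x. ennreal \<bar>h x\<bar>)"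
    and [measurable]: "\<And>k. g k \<in> borel_measurable M"
  shows "lux_norm M (\<lambda>x t. ennreal (\<phi> x t)) (\<lambda>x. \<Sum>k. nn_cond_exp M (F k) (g k) x)
    \<le> ennreal (8 * C * K) * lux_norm M (\<lambda>x t. ennreal (\<phi> x t)) (\<lambda>x. \<Sum>k. g k x)"
proof (rule dense_le)
  define E where "E x = (\<Sum>k. nn_cond_exp M (F k) (g k) x)" for x
  have E_measurable[measurable]: "E \<in> borel_measurable M" unfolding E_def by measurable
  fix y assume "y < lux_norm M (\<lambda>x t. ennreal (\<phi> x t)) (\<lambda>x. \<Sum>k. nn_cond_exp M (F k) (g k) x)"
  then obtain r where r: "y < r" "r < lux_norm M (\<lambda>x t. ennreal (\<phi> x t)) E"
    unfolding E_def[symmetric] using dense by blast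
  then obtain lam lam1 where lam: "y = ennreal lam" "r = ennreal lam1" "0 \<le> lam" "lam < lam1"
    by (cases y rule: ennreal_cases; cases r rule: ennreal_cases) (auto simp: ennreal_less_iff)
  show "y \<le> ennreal (8 * C * K) * lux_norm M (\<lambda>x t. ennreal (\<phi> x t)) (\<lambda>x. \<Sum>k. g k x)"
  proof (cases "lam = 0")
    case False
    then have "0 < lam" using lam by simp
    have "1 < modular M (\<lambda>x t. ennreal (\<phi> x t)) E lam1"
      using r lam \<open>0 < lam\<close> by (intro one_less_modular_of_less_lux_norm) auto
    then obtain R :: nat where big: "1 < modular M (\<lambda>x t. ennreal (\<phi> x t)) (\<lambda>x. min (E x) (of_nat R)) lam"
      using one_less_modular_truncation[OF mo E_measurable \<open>0 < lam\<close> \<open>lam < lam1\<close>] by blast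
    define f where "f x = enn2real (min (E x) (of_nat R))" for x
    have f_eq: "ennreal (f x) = min (E x) (of_nat R)" for x
    proof -
      have "min (E x) (of_nat R) \<noteq> top"
        by (rule neq_top_trans[OF _ min.cobounded2]) simp
      then show ?thesis unfolding f_def by (simp add: ennreal_enn2real_if)
    qed
    show ?thesis
      unfolding lam(1)
    proof (rule le_lux_norm_sum_of_one_less_modular[OF assms(1-6) doob])
      show "f \<in> borel_measurable M" unfolding f_def by measurable
      show "1 < modular M (\<lambda>x t. ennreal (\<phi> x t)) (\<lambda>x. ennreal (f x)) lam"
        using big by (simp add: f_eq)
      show "ennreal (f x) \<le> (\<Sum>k. nn_cond_exp M (F k) (g k) x)" for x
        unfolding f_eq E_def by simp
    qed (use \<open>0 < lam\<close> in \<open>auto simp: f_def\<close>)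
  qed (simp add: lam)
qed

theorem theorem3p5:
  fixes M :: "'a measure" and F :: "nat \<Rightarrow> 'a measure"
    and \<phi> :: "'a \<Rightarrow> real \<Rightarrow> real" and p :: real
  assumes "prob_space M"
    and "\<And>n. subalgebra M (F n)"
    and "\<And>m n. m \<le> n \<Longrightarrow> sets (F m) \<subseteq> sets (F n)"
    and "musielak_orlicz M \<phi>"
    and "p \<ge> 1" and "uniformly_lower_type M \<phi> p"
    and "\<exists>C>0. \<forall>f. f \<in> borel_measurable M \<and> integrable M f \<longrightarrow>
           lux_norm M (compl_fun \<phi>) (doob_max M F f)
             \<le> ennreal C * lux_norm M (compl_fun \<phi>) (\<lambda>x. ennreal \<bar>f x\<bar>)"
  shows "\<exists>C>0. \<forall>g :: nat \<Rightarrow> 'a \<Rightarrow> real.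
           (\<forall>k. g k \<in> borel_measurable M \<and> (\<forall>x\<in>space M. g k x \<ge> 0)) \<longrightarrow>
           lux_norm M (\<lambda>x t. ennreal (\<phi> x t)) (\<lambda>x. \<Sum>k. nn_cond_exp M (F k) (\<lambda>y. ennreal (g k y)) x)
             \<le> ennreal C * lux_norm M (\<lambda>x t. ennreal (\<phi> x t)) (\<lambda>x. \<Sum>k. ennreal (g k x))"
proof -
  obtain C where "C \<ge> 1"
    and lower: "\<And>x t s. x \<in> space M \<Longrightarrow> 0 \<le> t \<Longrightarrow> 0 < s \<Longrightarrow> s < 1 \<Longrightarrow> \<phi> x (s * t) \<le> C * s * \<phi> x t"
    using uniformly_lower_type_linear[OF assms(6,5,4)] by blast
  obtain K where "K > 0" and doob: "\<And>h. h \<in> borel_measurable M \<Longrightarrow> integrable M h \<Longrightarrow>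
      lux_norm M (compl_fun \<phi>) (doob_max M F h) \<le> ennreal K * lux_norm M (compl_fun \<phi>) (\<lambda>x. ennreal \<bar>h x\<bar>)"
    using assms(7) by blast
  have "finite_measure M" using \<open>prob_space M\<close> by (rule prob_space.finite_measure)
  show ?thesis
    using lux_norm_suminf_nn_cond_exp_le[OF \<open>finite_measure M\<close> assms(2,4) \<open>C \<ge> 1\<close> lower \<open>K > 0\<close> doob]
      \<open>C \<ge> 1\<close> \<open>K > 0\<close> by (intro exI[of _ "8 * C * K"]) auto
qed

end
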